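(* Let $N\geq 4$ and let $\Gamma$ be the graph obtained from the cycle graph $C_N$ by adding one edge (a chord) $\{n,m\}$ between two vertices that are not adjacent in $C_N$. Then $\mathcal C^N(\Gamma)=0$. (Consequently, under the entropy model $S(Q)=\alpha L(Q)-J(Q)\log\mathcal D$ the $N$-partite information of the whole collection vanishes, while each of the two cycles created by the chord, if it has at least $3$ vertices, is itself a cycle graph for which $\mathcal C=2(-1)^{p-1}$, $p$ its number of vertices.)
   Context: Let $\Gamma$ be a finite simple graph with vertex set $[N]$ (vertices model planar subsystems, edges model shared walls/handles, each cycle encloses a hole). For nonempty $Q\subseteq[N]$ let $\Gamma[Q]$ be the induced subgraph, $c(Q)$ its number of connected components, $e(Q)$ its number of edges, $b_1(Q)=e(Q)-|Q|+c(Q)$. Define $J(Q)=c(Q)+b_1(Q)$ (number of boundary components of the union of the subsystems in $Q$) and $\mathcal C^N(\Gamma)=\sum_{\emptyset\neq Q\subseteq[N]}(-1)^{|Q|-1}J(Q)$. $C_N$ has edges $\{i,i+1\bmod N\}$. *)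

theory Defs
  imports Main
begin

definition induced_adj :: "'a set set \<Rightarrow> 'a set \<Rightarrow> ('a \<times> 'a) set" where
  "induced_adj E Q = {(u, v). u \<in> Q \<and> v \<in> Q \<and> {u, v} \<in> E}"

definition comp_rel :: "'a set set \<Rightarrow> 'a set \<Rightarrow> ('a \<times> 'a) set" where
  "comp_rel E Q = Restr ((induced_adj E Q)\<^sup>*) Q"

definition n_comp :: "'a set set \<Rightarrow> 'a set \<Rightarrow> nat" where
  "n_comp E Q = card (Q // comp_rel E Q)"

definition n_edges :: "'a set set \<Rightarrow> 'a set \<Rightarrow> nat" where
  "n_edges E Q = card {e \<in> E. e \<subseteq> Q}"

definition betti1 :: "'a set set \<Rightarrow> 'a set \<Rightarrow> int" where
  "betti1 E Q = int (n_edges E Q) - int (card Q) + int (n_comp E Q)"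

definition Jb :: "'a set set \<Rightarrow> 'a set \<Rightarrow> int" where
  "Jb E Q = int (n_comp E Q) + betti1 E Q"

definition CN :: "'a set set \<Rightarrow> 'a set \<Rightarrow> int" where
  "CN E V = (\<Sum>Q \<in> Pow V - {{}}. (-1) ^ (card Q - 1) * Jb E Q)"

definition cycle_edges :: "nat \<Rightarrow> nat set set" where
  "cycle_edges N = {{i, (i + 1) mod N} | i. i < N}"

end

theory Submission
  imports Defs
begin

text \<open>Since \<open>J(Q) = 2 c(Q) + e(Q) - |Q|\<close>, adding an edge \<open>{a, b}\<close> with both ends in Q
  changes \<open>J(Q)\<close> by \<open>+1\<close> if a and b are already connected in \<open>\<Gamma>[Q]\<close> and by \<open>-1\<close> otherwise.
  Build \<open>\<Gamma>\<close> from the path \<open>0 - 1 - \<dots> - k\<close> (\<open>k = N - 1\<close>), whose J is \<open>|Q|\<close> minus the number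
  of path edges in Q, by adding the edge \<open>{0, k}\<close> and then the chord \<open>{n, m}\<close>, \<open>n < m\<close>. Two
  vertices of the cycle are connected in \<open>\<Gamma>[Q]\<close> iff one of the two arcs between them lies
  in Q, so \<open>J(Q)\<close> is an integer combination of indicators \<open>[S \<subseteq> Q]\<close>, where S ranges over
  single vertices, the edges of \<open>\<Gamma>\<close> and the arcs \<open>{n..m}\<close> and \<open>{0..n} \<union> {m..k}\<close>. As the chord
  joins non-adjacent vertices, each such S is a nonempty proper subset of the vertex set, and
  for those the alternating sum of \<open>[S \<subseteq> Q]\<close> over all nonempty Q vanishes.\<close>

lemma quotient_merge_classes:
  assumes R: "equiv A R" and "a \<in> A" "b \<in> A"
  shows "A // (R \<union> R``{a, b} \<times> R``{a, b}) = insert (R``{a, b}) (A // R - {R``{a}, R``{b}})"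
proof -
  let ?M = "R``{a, b}"
  have sym_R: "(x, y) \<in> R \<Longrightarrow> (y, x) \<in> R" for x y
    using R by (meson equiv_def symD)
  have same_class: "R``{x} \<in> {R``{a}, R``{b}} \<longleftrightarrow> x \<in> ?M" if "x \<in> A" for x
    using R that assms(2,3) by (auto simp: eq_equiv_class_iff intro: sym_R)
  have "a \<in> ?M"
    using R assms(2) by (auto simp: equiv_def refl_on_def)
  have "A // (R \<union> ?M \<times> ?M) = (\<lambda>x. if x \<in> ?M then ?M else R``{x}) ` A"
    unfolding quotient_def UNION_singleton_eq_range
    using same_class by (intro image_cong) auto
  also have "\<dots> = insert ?M ((\<lambda>x. R``{x}) ` (A - ?M))"
    using \<open>a \<in> ?M\<close> assms(2) by (auto simp: image_iff)
  also have "(\<lambda>x. R``{x}) ` (A - ?M) = A // R - {R``{a}, R``{b}}"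
    unfolding quotient_def UNION_singleton_eq_range using same_class by blast
  finally show ?thesis .
qed

lemma card_quotient_merge_classes:
  assumes "finite A" and R: "equiv A R" and "a \<in> A" "b \<in> A" "(a, b) \<notin> R"
  shows "card (A // (R \<union> R``{a, b} \<times> R``{a, b})) + 1 = card (A // R)"
proof -
  have fin: "finite (A // R)"
    using finite_quotient[OF assms(1) equiv_type[OF R]] .
  have classes: "R``{a} \<in> A // R" "R``{b} \<in> A // R" "R``{a} \<noteq> R``{b}"
    using assms by (auto intro: quotientI simp: eq_equiv_class_iff)
  have "R``{a, b} \<notin> A // R"
  proof
    assume "R``{a, b} \<in> A // R"
    moreover have "a \<in> R``{a, b} \<inter> R``{a}" "b \<in> R``{a, b} \<inter> R``{b}"
      using R assms(3,4) by (auto simp: equiv_def refl_on_def)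
    ultimately have "R``{a, b} = R``{a}" "R``{a, b} = R``{b}"
      using quotient_disj[OF R] classes by blast+
    then show False using classes(3) by simp
  qed
  moreover have "card (A // R - {R``{a}, R``{b}}) + 2 = card (A // R)"
  proof -
    have sub: "{R``{a}, R``{b}} \<subseteq> A // R" and two: "card {R``{a}, R``{b}} = 2"
      using classes by auto
    have "2 \<le> card (A // R)"
      using card_mono[OF fin sub] two by simp
    then show ?thesis
      using fin sub two by (simp add: card_Diff_subset)
  qed
  ultimately show ?thesis
    unfolding quotient_merge_classes[OF R assms(3,4)] using fin by simp
qed

lemma sym_induced_adj: "sym (induced_adj E Q)"
  by (auto simp: sym_def induced_adj_def insert_commute)

lemma equiv_comp_rel: "equiv Q (comp_rel E Q)"
proof (rule equivI)
  show "comp_rel E Q \<subseteq> Q \<times> Q" "refl_on Q (comp_rel E Q)"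
    by (auto simp: comp_rel_def refl_on_def)
  have "sym ((induced_adj E Q)\<^sup>*)"
    by (rule sym_rtrancl[OF sym_induced_adj])
  then show "sym (comp_rel E Q)"
    by (auto simp: comp_rel_def sym_def)
  show "trans (comp_rel E Q)"
    by (auto simp: comp_rel_def trans_def intro: rtrancl_trans)
qed

lemma comp_rel_insert_edge_outside:
  assumes "a \<notin> Q \<or> b \<notin> Q"
  shows "comp_rel (insert {a, b} E) Q = comp_rel E Q"
proof -
  have "induced_adj (insert {a, b} E) Q = induced_adj E Q"
    using assms by (auto simp: induced_adj_def doubleton_eq_iff)
  then show ?thesis
    by (simp add: comp_rel_def)
qed

lemma comp_rel_insert_edge:
  fixes E :: "'a set set"
  assumes "a \<in> Q" "b \<in> Q"
  defines "R \<equiv> comp_rel E Q"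
  shows "comp_rel (insert {a, b} E) Q = R \<union> R``{a, b} \<times> R``{a, b}"
proof
  let ?R' = "comp_rel (insert {a, b} E) Q"
  have R: "sym R" "trans R" "(a, a) \<in> R" "(b, b) \<in> R" "R \<subseteq> Q \<times> Q"
    using equiv_comp_rel[of Q E] assms by (auto simp: R_def equiv_def refl_on_def)
  have adj: "induced_adj (insert {a, b} E) Q = induced_adj E Q \<union> {(a, b), (b, a)}"
    using assms(1,2) by (auto simp: induced_adj_def doubleton_eq_iff)
  have adj_R: "induced_adj E Q \<subseteq> R"
    by (auto simp: R_def comp_rel_def induced_adj_def)
  show "?R' \<subseteq> R \<union> R``{a, b} \<times> R``{a, b}"
  proof (rule subrelI)
    fix x y assume "(x, y) \<in> ?R'"
    then have "(x, y) \<in> (induced_adj E Q \<union> {(a, b), (b, a)})\<^sup>*" "x \<in> Q"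
      by (auto simp: comp_rel_def adj)
    then show "(x, y) \<in> R \<union> R``{a, b} \<times> R``{a, b}"
    proof (induction rule: rtrancl_induct)
      case base
      then show ?case using equiv_comp_rel[of Q E] by (auto simp: R_def equiv_def refl_on_def)
    next
      case (step y z)
      then show ?case using R adj_R by (auto dest: symD transD)
    qed
  qed
  have R'_equiv: "sym ?R'" "trans ?R'"
    using equiv_comp_rel[of Q "insert {a, b} E"] by (auto simp: equiv_def)
  have "R \<subseteq> ?R'"
    unfolding R_def comp_rel_def adj by (auto intro: rtrancl_mono[THEN subsetD])
  moreover have "(a, b) \<in> ?R'"
    using assms(1,2) by (auto simp: comp_rel_def adj)
  ultimately show "R \<union> R``{a, b} \<times> R``{a, b} \<subseteq> ?R'"
    by (blast intro: transD[OF R'_equiv(2)] symD[OF R'_equiv(1)])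
qed

lemma n_comp_insert_edge:
  assumes "finite Q"
  shows "int (n_comp (insert {a, b} E) Q)
       = int (n_comp E Q) - of_bool ({a, b} \<subseteq> Q \<and> (a, b) \<notin> comp_rel E Q)"
proof -
  let ?R = "comp_rel E Q"
  consider "a \<notin> Q \<or> b \<notin> Q" | "{a, b} \<subseteq> Q" "(a, b) \<in> ?R" | "{a, b} \<subseteq> Q" "(a, b) \<notin> ?R"
    by blast
  then show ?thesis
  proof cases
    case 1
    then show ?thesis
      by (auto simp: n_comp_def comp_rel_insert_edge_outside[OF 1])
  next
    case 2
    have "?R``{a, b} \<times> ?R``{a, b} \<subseteq> ?R"
      using 2 equiv_comp_rel[of Q E]
      by (auto simp: eq_equiv_class_iff dest: equiv_class_eq_iff[THEN iffD1] intro: equiv_class_eq)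
    then show ?thesis
      using 2 by (simp add: n_comp_def comp_rel_insert_edge Un_absorb2)
  next
    case 3
    then show ?thesis
      using card_quotient_merge_classes[OF assms equiv_comp_rel, of a b E]
      by (simp add: n_comp_def comp_rel_insert_edge)
  qed
qed

lemma n_edges_insert:
  assumes "finite Q" "e \<notin> E"
  shows "n_edges (insert e E) Q = n_edges E Q + of_bool (e \<subseteq> Q)"
proof -
  have "finite {x \<in> E. x \<subseteq> Q}"
    by (rule finite_subset[of _ "Pow Q"]) (use assms(1) in auto)
  moreover have "{x \<in> insert e E. x \<subseteq> Q}
      = (if e \<subseteq> Q then insert e {x \<in> E. x \<subseteq> Q} else {x \<in> E. x \<subseteq> Q})"
    by auto
  ultimately show ?thesis
    using assms(2) by (simp add: n_edges_def)
qed

lemma Jb_eq_comp_edges: "Jb E Q = 2 * int (n_comp E Q) + int (n_edges E Q) - int (card Q)"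
  by (simp add: Jb_def betti1_def)

lemma Jb_no_edges:
  assumes "finite Q"
  shows "Jb {} Q = int (card Q)"
proof -
  have "comp_rel {} Q = Id_on Q"
    by (auto simp: comp_rel_def induced_adj_def)
  moreover have "Q // Id_on Q = (\<lambda>x. {x}) ` Q"
    by (auto simp: quotient_def)
  ultimately show ?thesis
    by (simp add: Jb_eq_comp_edges n_comp_def n_edges_def card_image)
qed

lemma Jb_insert_edge:
  assumes "finite Q" "{a, b} \<notin> E"
  shows "Jb (insert {a, b} E) Q = Jb E Q + 2 * of_bool ((a, b) \<in> comp_rel E Q) - of_bool ({a, b} \<subseteq> Q)"
proof -
  have "(a, b) \<in> comp_rel E Q \<Longrightarrow> {a, b} \<subseteq> Q"
    by (auto simp: comp_rel_def)
  then show ?thesis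
    using assms by (auto simp: Jb_eq_comp_edges n_comp_insert_edge n_edges_insert)
qed

definition path_edges :: "nat \<Rightarrow> nat set set" where
  "path_edges k = {{i, Suc i} | i. i < k}"

lemma path_edges_0 [simp]: "path_edges 0 = {}"
  by (simp add: path_edges_def)

lemma path_edges_Suc: "path_edges (Suc k) = insert {k, Suc k} (path_edges k)"
  by (auto simp: path_edges_def less_Suc_eq)

lemma path_edges_reachable_beyond:
  assumes "k < y" "(x, y) \<in> (induced_adj (path_edges k) Q)\<^sup>*"
  shows "x = y"
  using assms(2)
proof (cases rule: rtranclE)
  case (step z)
  then show ?thesis
    using assms(1) by (auto simp: induced_adj_def path_edges_def doubleton_eq_iff)
qed

lemma Jb_path_edges:
  assumes "finite Q"
  shows "Jb (path_edges k) Q = int (card Q) - (\<Sum>i<k. of_bool ({i, Suc i} \<subseteq> Q))"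
proof (induction k)
  case 0
  then show ?case using Jb_no_edges[OF assms] by simp
next
  case (Suc k)
  have "{k, Suc k} \<notin> path_edges k"
    by (auto simp: path_edges_def doubleton_eq_iff)
  moreover have "(k, Suc k) \<notin> comp_rel (path_edges k) Q"
    using path_edges_reachable_beyond[of k "Suc k" k] by (auto simp: comp_rel_def)
  ultimately show ?case
    using Suc by (simp add: path_edges_Suc Jb_insert_edge[OF assms])
qed

lemma path_edges_reachable_same_side:
  assumes "(x, y) \<in> (induced_adj (path_edges k) Q)\<^sup>*" "z \<notin> Q"
  shows "x < z \<longleftrightarrow> y < z"
  using assms(1)
proof (induction rule: rtrancl_induct)
  case (step y w)
  then have "w = Suc y \<or> y = Suc w" "y \<in> Q" "w \<in> Q"
    by (auto simp: induced_adj_def path_edges_def doubleton_eq_iff)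
  moreover have "y \<noteq> z" "w \<noteq> z"
    using calculation(2,3) assms(2) by auto
  ultimately show ?case
    using step.IH by auto
qed simp

lemma path_edges_reachable_interval:
  assumes "x \<le> y" "y \<le> k" "{x..y} \<subseteq> Q"
  shows "(x, y) \<in> (induced_adj (path_edges k) Q)\<^sup>*"
  using assms
proof (induction y)
  case (Suc y)
  show ?case
  proof (cases "x = Suc y")
    case False
    then have "x \<le> y" "y \<le> k" "{x..y} \<subseteq> Q"
      using Suc.prems by auto
    then have "(x, y) \<in> (induced_adj (path_edges k) Q)\<^sup>*"
      using Suc.IH by simp
    moreover have "(y, Suc y) \<in> induced_adj (path_edges k) Q"
      using Suc.prems False by (auto simp: induced_adj_def path_edges_def)
    ultimately show ?thesis
      by (rule rtrancl_into_rtrancl)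
  qed simp
qed simp

lemma comp_rel_path_edges_iff:
  assumes "x \<le> y" "y \<le> k"
  shows "(x, y) \<in> comp_rel (path_edges k) Q \<longleftrightarrow> {x..y} \<subseteq> Q"
proof
  assume "(x, y) \<in> comp_rel (path_edges k) Q"
  then have reach: "(x, y) \<in> (induced_adj (path_edges k) Q)\<^sup>*" and "x \<in> Q" "y \<in> Q"
    by (auto simp: comp_rel_def)
  show "{x..y} \<subseteq> Q"
  proof
    fix z assume z: "z \<in> {x..y}"
    show "z \<in> Q"
    proof (rule ccontr)
      assume "z \<notin> Q"
      then have "x < z \<longleftrightarrow> y < z" "x \<noteq> z" "y \<noteq> z"
        using path_edges_reachable_same_side[OF reach] \<open>x \<in> Q\<close> \<open>y \<in> Q\<close> by auto
      then show False
        using z by auto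
    qed
  qed
next
  assume "{x..y} \<subseteq> Q"
  then show "(x, y) \<in> comp_rel (path_edges k) Q"
    using assms path_edges_reachable_interval[of x y k Q] by (auto simp: comp_rel_def)
qed

lemma cycle_edges_Suc: "cycle_edges (Suc k) = insert {0, k} (path_edges k)"
proof -
  have "cycle_edges (Suc k) = (\<lambda>i. {i, Suc i mod Suc k}) ` insert k {..<k}"
    by (auto simp: cycle_edges_def lessThan_Suc[symmetric])
  also have "\<dots> = insert {0, k} ((\<lambda>i. {i, Suc i}) ` {..<k})"
    by (auto simp: insert_commute)
  also have "\<dots> = insert {0, k} (path_edges k)"
    by (auto simp: path_edges_def)
  finally show ?thesis .
qed

lemma comp_rel_cycle_iff:
  assumes "x \<le> y" "y \<le> k"
  shows "(x, y) \<in> comp_rel (insert {0, k} (path_edges k)) Q \<longleftrightarrow> {x..y} \<subseteq> Q \<or> {0..x} \<union> {y..k} \<subseteq> Q"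
proof (cases "0 \<in> Q \<and> k \<in> Q")
  case True
  let ?R = "comp_rel (path_edges k) Q"
  have sym_R: "(z, k) \<in> ?R \<longleftrightarrow> (k, z) \<in> ?R" for z
    using equiv_comp_rel[of Q "path_edges k"] by (meson equiv_def symD)
  have "z \<in> ?R``{0, k} \<longleftrightarrow> {0..z} \<subseteq> Q \<or> {z..k} \<subseteq> Q" if "z \<le> k" for z
    using that sym_R[of z] comp_rel_path_edges_iff[of 0 z k Q] comp_rel_path_edges_iff[of z k k Q]
    by auto
  moreover have "{0..y} \<subseteq> Q \<Longrightarrow> {x..y} \<subseteq> Q" "{x..k} \<subseteq> Q \<Longrightarrow> {x..y} \<subseteq> Q"
    using assms by auto
  ultimately show ?thesis
    using True assms comp_rel_path_edges_iff[of x y k Q]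
    by (auto simp: comp_rel_insert_edge)
next
  case False
  then show ?thesis
    using assms comp_rel_path_edges_iff[of x y k Q] by (auto simp: comp_rel_insert_edge_outside)
qed

lemma Jb_chorded_cycle:
  assumes "Suc n < m" "m \<le> k" "\<not> (n = 0 \<and> m = k)" "finite Q"
  shows "Jb (insert {n, m} (insert {0, k} (path_edges k))) Q
       = int (card Q) - (\<Sum>i<k. of_bool ({i, Suc i} \<subseteq> Q)) - of_bool ({0, k} \<subseteq> Q)
         - of_bool ({n, m} \<subseteq> Q) + 2 * of_bool ({n..m} \<subseteq> Q) + 2 * of_bool ({0..n} \<union> {m..k} \<subseteq> Q)"
proof -
  have "{0, k} \<notin> path_edges k"
    using assms(1,2) by (auto simp: path_edges_def doubleton_eq_iff)
  then have cycle: "Jb (insert {0, k} (path_edges k)) Q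
      = Jb (path_edges k) Q + 2 * of_bool ({0..k} \<subseteq> Q) - of_bool ({0, k} \<subseteq> Q)"
    using comp_rel_path_edges_iff[of 0 k k Q] by (simp add: Jb_insert_edge[OF assms(4)])
  have "{n, m} \<notin> insert {0, k} (path_edges k)"
    using assms(1,3) by (auto simp: path_edges_def doubleton_eq_iff)
  then have chord: "Jb (insert {n, m} (insert {0, k} (path_edges k))) Q
      = Jb (insert {0, k} (path_edges k)) Q + 2 * of_bool ({n..m} \<subseteq> Q \<or> {0..n} \<union> {m..k} \<subseteq> Q)
        - of_bool ({n, m} \<subseteq> Q)"
    using comp_rel_cycle_iff[of n m k Q] assms(1,2) by (simp add: Jb_insert_edge[OF assms(4)])
  have "{n..m} \<union> ({0..n} \<union> {m..k}) = {0..k}"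
    using assms(1,2) by auto
  then have "{n..m} \<subseteq> Q \<and> {0..n} \<union> {m..k} \<subseteq> Q \<longleftrightarrow> {0..k} \<subseteq> Q"
    by (metis Un_subset_iff)
  moreover have "of_bool (P \<or> P') = of_bool P + of_bool P' - (of_bool (P \<and> P') :: int)" for P P'
    by auto
  ultimately have "of_bool ({n..m} \<subseteq> Q \<or> {0..n} \<union> {m..k} \<subseteq> Q)
      = of_bool ({n..m} \<subseteq> Q) + of_bool ({0..n} \<union> {m..k} \<subseteq> Q) - (of_bool ({0..k} \<subseteq> Q) :: int)"
    by presburger
  then show ?thesis
    using chord cycle Jb_path_edges[OF assms(4)] by simp
qed

definition alternating_sum :: "'a set \<Rightarrow> ('a set \<Rightarrow> int) \<Rightarrow> int" where
  "alternating_sum V f = (\<Sum>Q\<in>Pow V - {{}}. (-1) ^ (card Q - 1) * f Q)"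

lemma CN_eq_alternating_sum: "CN E V = alternating_sum V (Jb E)"
  by (simp add: CN_def alternating_sum_def)

lemma alternating_sum_cong:
  "(\<And>Q. Q \<subseteq> V \<Longrightarrow> Q \<noteq> {} \<Longrightarrow> f Q = g Q) \<Longrightarrow> alternating_sum V f = alternating_sum V g"
  unfolding alternating_sum_def by (intro sum.cong) auto

lemma alternating_sum_add:
  "alternating_sum V (\<lambda>Q. f Q + g Q) = alternating_sum V f + alternating_sum V g"
  by (simp add: alternating_sum_def sum.distrib algebra_simps)

lemma alternating_sum_diff:
  "alternating_sum V (\<lambda>Q. f Q - g Q) = alternating_sum V f - alternating_sum V g"
  by (simp add: alternating_sum_def sum_subtractf algebra_simps)

lemma alternating_sum_mult:
  "alternating_sum V (\<lambda>Q. c * f Q) = c * alternating_sum V f"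
  by (simp add: alternating_sum_def sum_distrib_left algebra_simps)

lemma alternating_sum_sum:
  "alternating_sum V (\<lambda>Q. \<Sum>i\<in>I. f i Q) = (\<Sum>i\<in>I. alternating_sum V (f i))"
  unfolding alternating_sum_def sum_distrib_left by (rule sum.swap)

text \<open>Only the subsets between S and V contribute, and these cancel in pairs.\<close>
lemma alternating_sum_subset_indicator:
  assumes V: "finite V" and S: "S \<subseteq> V" "S \<noteq> {}" "S \<noteq> V"
  shows "alternating_sum V (\<lambda>Q. of_bool (S \<subseteq> Q)) = 0"
proof -
  have "alternating_sum V (\<lambda>Q. of_bool (S \<subseteq> Q)) = (\<Sum>Q | Q \<subseteq> V \<and> S \<subseteq> Q. (-1) ^ (card Q - 1))"
    unfolding alternating_sum_def using V S(2) by (intro sum.mono_neutral_cong_right) auto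
  also have "\<dots> = - (\<Sum>Q | Q \<subseteq> V \<and> S \<subseteq> Q. (-1) ^ card Q)"
    unfolding sum_negf[symmetric]
  proof (rule sum.cong)
    fix Q assume "Q \<in> {Q. Q \<subseteq> V \<and> S \<subseteq> Q}"
    then have "card Q \<noteq> 0"
      using V S(2) finite_subset by fastforce
    then show "(-1::int) ^ (card Q - 1) = - ((-1) ^ card Q)"
      by (cases "card Q") auto
  qed simp
  also have "\<dots> = 0"
    using V S by (simp add: sum_alternating_cancels card_subsupersets_even_odd psubset_eq)
  finally show ?thesis .
qed

lemma alternating_sum_card:
  assumes "finite V" "2 \<le> card V"
  shows "alternating_sum V (\<lambda>Q. int (card Q)) = 0"
proof -
  have "alternating_sum V (\<lambda>Q. int (card Q)) = alternating_sum V (\<lambda>Q. \<Sum>i\<in>V. of_bool ({i} \<subseteq> Q))"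
  proof (rule alternating_sum_cong)
    fix Q assume "Q \<subseteq> V"
    then show "int (card Q) = (\<Sum>i\<in>V. of_bool ({i} \<subseteq> Q))"
      using assms(1) by (simp add: of_bool_def sum.If_cases Int_absorb1)
  qed
  also have "\<dots> = 0"
    unfolding alternating_sum_sum
  proof (rule sum.neutral, rule ballI)
    fix i assume "i \<in> V"
    moreover have "{i} \<noteq> V"
      using assms(2) by auto
    ultimately show "alternating_sum V (\<lambda>Q. of_bool ({i} \<subseteq> Q)) = 0"
      using assms(1) by (intro alternating_sum_subset_indicator) auto
  qed
  finally show ?thesis .
qed

lemma CN_chorded_cycle:
  assumes "Suc n < m" "m \<le> k" "\<not> (n = 0 \<and> m = k)"
  shows "CN (insert {n, m} (insert {0, k} (path_edges k))) {0..k} = 0"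
proof -
  let ?V = "{0..k}"
  have k: "3 \<le> k"
    using assms by auto
  have proper: "alternating_sum ?V (\<lambda>Q. of_bool (S \<subseteq> Q)) = 0"
    if "S \<subseteq> ?V" "x \<in> S" "y \<in> ?V" "y \<notin> S" for S x y
    using that by (intro alternating_sum_subset_indicator) auto
  have pairs: "alternating_sum ?V (\<lambda>Q. \<Sum>i<k. of_bool ({i, Suc i} \<subseteq> Q)) = 0"
    unfolding alternating_sum_sum
  proof (rule sum.neutral, rule ballI)
    fix i assume "i \<in> {..<k}"
    then show "alternating_sum ?V (\<lambda>Q. of_bool ({i, Suc i} \<subseteq> Q)) = 0"
      using k by (intro proper[of _ i "if i = 0 then 2 else 0"]) auto
  qed
  have cycle_chord: "alternating_sum ?V (\<lambda>Q. of_bool ({0, k} \<subseteq> Q)) = 0"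
    "alternating_sum ?V (\<lambda>Q. of_bool ({n, m} \<subseteq> Q)) = 0"
    using assms k by (intro proper[of _ 0 1] proper[of _ n "Suc n"]; auto)+
  have arcs: "alternating_sum ?V (\<lambda>Q. of_bool ({n..m} \<subseteq> Q)) = 0"
    "alternating_sum ?V (\<lambda>Q. of_bool ({0..n} \<union> {m..k} \<subseteq> Q)) = 0"
    using assms by (intro proper[of _ n "if n = 0 then k else 0"] proper[of _ 0 "Suc n"]; auto)+
  have "CN (insert {n, m} (insert {0, k} (path_edges k))) ?V
      = alternating_sum ?V (\<lambda>Q. int (card Q) - (\<Sum>i<k. of_bool ({i, Suc i} \<subseteq> Q))
          - of_bool ({0, k} \<subseteq> Q) - of_bool ({n, m} \<subseteq> Q)
          + 2 * of_bool ({n..m} \<subseteq> Q) + 2 * of_bool ({0..n} \<union> {m..k} \<subseteq> Q))"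
    unfolding CN_eq_alternating_sum
    using assms by (intro alternating_sum_cong Jb_chorded_cycle) (auto intro: finite_subset)
  also have "\<dots> = 0"
    using alternating_sum_card[of ?V] k pairs cycle_chord arcs
    by (simp only: alternating_sum_add alternating_sum_diff alternating_sum_mult) simp
  finally show ?thesis .
qed

theorem mainTheorem9:
  fixes N n m :: nat
  assumes "N \<ge> 4" and "n < N" and "m < N" and "n \<noteq> m"
    and "{n, m} \<notin> cycle_edges N"
  shows "CN (insert {n, m} (cycle_edges N)) {0..<N} = 0"
proof -
  define k where "k = N - 1"
  define a b where "a = min n m" and "b = max n m"
  have N: "N = Suc k" and edges: "cycle_edges N = insert {0, k} (path_edges k)"
    using assms(1) by (simp_all add: k_def cycle_edges_Suc[symmetric])
  have chord: "{n, m} = {a, b}" and "a < b" "b \<le> k"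
    using assms(2-4) by (auto simp: a_def b_def k_def)
  moreover have "b \<noteq> Suc a" "\<not> (a = 0 \<and> b = k)"
    using assms(5) \<open>b \<le> k\<close> unfolding edges chord by (auto simp: path_edges_def)
  ultimately have "CN (insert {a, b} (insert {0, k} (path_edges k))) {0..k} = 0"
    by (intro CN_chorded_cycle) auto
  then show ?thesis
    using N edges chord by (simp add: atLeastLessThanSuc_atLeastAtMost)
qed

end
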